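(* Assume $\delta>d$ and $\alpha=\gamma/(\delta-d)$. Then $$\frac{|q(z,w)|/|p(z)|^\alpha}{\big(|w|/|z|^\alpha\big)^d}\longrightarrow 1\quad\text{as } |z|\to\infty \text{ and } |w|/|z|^\alpha\to\infty,$$ and there is $R_0>0$ such that for every $R\ge R_0$ the set $W_R=\{(z,w):|z|>R,\ |w|>R|z|^\alpha\}$ satisfies $f(W_R)\subset W_R$.
   Context: Let $p(z)=z^\delta+O(z^{\delta-1})$ be a monic polynomial of degree $\delta\ge 2$, and let $q(z,w)=b(z)w^d+(\text{terms of lower degree in } w)$ be a polynomial with $d=\deg_w q\ge 2$, where $b$ is a monic polynomial of degree $\gamma\ge 0$. Let $f(z,w)=(p(z),q(z,w))$. For $\delta>d$, define $$\alpha=\max\Big\{\frac{n_j}{\delta-m_j}\;:\; z^{n_j}w^{m_j}\text{ is a monomial appearing in } q \text{ with nonzero coefficient}\Big\}.$$ *)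

theory Defs
  imports "HOL-Analysis.Analysis" "HOL-Computational_Algebra.Polynomial"
begin

text \<open>A polynomial q(z,w) in two variables is represented as a polynomial in w whose
coefficients are polynomials in z: q(z,w) = sum_m (coeff q m)(z) w^m.\<close>

definition eval2 :: "complex poly poly \<Rightarrow> complex \<Rightarrow> complex \<Rightarrow> complex" where
  "eval2 q z w = (\<Sum>m\<le>degree q. poly (coeff q m) z * w ^ m)"

definition monomial_exps :: "complex poly poly \<Rightarrow> (nat \<times> nat) set" where
  "monomial_exps q = {(n, m). coeff (coeff q m) n \<noteq> 0}"

definition alpha_exp :: "nat \<Rightarrow> complex poly poly \<Rightarrow> real" where
  "alpha_exp \<delta> q = Max ((\<lambda>(n, m). real n / (real \<delta> - real m)) ` monomial_exps q)"

definition W_set :: "real \<Rightarrow> real \<Rightarrow> (complex \<times> complex) set" where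
  "W_set \<alpha> R = {(z, w). norm z > R \<and> norm w > R * norm z powr \<alpha>}"

end

theory Submission
  imports Defs
begin

(* Write d = deg_w q, gamma = deg b and alpha = gamma / (delta - d), so that gamma = alpha (delta - d).
   Along the filter |z| -> infinity, |w| / |z|^alpha -> infinity we show
     X = |q(z,w)| / (|z|^gamma |w|^d) -> 1    and    Y = |p(z)| / |z|^delta -> 1.
   For Y this is the usual estimate for monic polynomials.  For X, the defining property of alpha
   says that each monomial z^n w^m of q has n <= alpha (delta - m); hence every monomial with m < d
   is at most u^(d-m) <= u times the leading weight |z|^gamma |w|^d, where u = |z|^alpha / |w| -> 0,
   and the lower terms of b(z) w^d are O(1/|z|) times that weight.  The ratio of the theorem equals
   X / Y^alpha, which proves the first claim.  For the second, both ratios exceed 1/2 on a region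
   |z| >= N1, |w| / |z|^alpha >= N2; for R >= max 2 N1 N2 this gives |p(z)| > |z| > R and
   |q(z,w)| > (1/2) |p(z)|^alpha (|w| / |z|^alpha)^d > R |p(z)|^alpha on W_R. *)

definition coeff_norm_sum :: "complex poly \<Rightarrow> real" where
  "coeff_norm_sum c = (\<Sum>n\<le>degree c. norm (coeff c n))"

lemma coeff_norm_sum_nonneg: "coeff_norm_sum c \<ge> 0"
  unfolding coeff_norm_sum_def by (intro sum_nonneg) auto

lemma poly_norm_le_powr:
  fixes c :: "complex poly" and z :: complex and e :: real
  assumes z1: "norm z \<ge> 1" and exps: "\<And>n. coeff c n \<noteq> 0 \<Longrightarrow> real n \<le> e"
  shows "norm (poly c z) \<le> coeff_norm_sum c * norm z powr e"
proof -
  have "norm (poly c z) = norm (\<Sum>n\<le>degree c. coeff c n * z ^ n)" by (simp add: poly_altdef)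
  also have "\<dots> \<le> (\<Sum>n\<le>degree c. norm (coeff c n) * norm z ^ n)"
    by (rule order_trans[OF norm_sum]) (simp add: norm_mult norm_power)
  also have "\<dots> \<le> (\<Sum>n\<le>degree c. norm (coeff c n) * norm z powr e)"
  proof (rule sum_mono)
    fix n
    show "norm (coeff c n) * norm z ^ n \<le> norm (coeff c n) * norm z powr e"
    proof (cases "coeff c n = 0")
      case False
      have "norm z ^ n = norm z powr real n" using z1 by (subst powr_realpow) auto
      also have "\<dots> \<le> norm z powr e" using z1 exps[OF False] by (intro powr_mono) auto
      finally show ?thesis by (intro mult_left_mono) auto
    qed simp
  qed
  also have "\<dots> = coeff_norm_sum c * norm z powr e"
    by (simp add: coeff_norm_sum_def sum_distrib_right)
  finally show ?thesis .
qed

lemma monic_poly_remainder_bound: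
  fixes c :: "complex poly" and z :: complex
  assumes monic: "lead_coeff c = 1" and z1: "norm z \<ge> 1"
  shows "norm (poly c z - z ^ degree c)
           \<le> coeff_norm_sum (c - monom 1 (degree c)) * norm z ^ degree c / norm z"
proof -
  have exps: "real n \<le> real (degree c) - 1" if "coeff (c - monom 1 (degree c)) n \<noteq> 0" for n
  proof -
    have "n \<noteq> degree c" using that monic by auto
    moreover have "\<not> n > degree c" using that by (auto simp: coeff_eq_0 coeff_monom)
    ultimately show ?thesis by linarith
  qed
  have z0: "norm z > 0" using z1 by linarith
  have "norm (poly c z - z ^ degree c) = norm (poly (c - monom 1 (degree c)) z)"
    by (simp add: poly_monom)
  also have "\<dots> \<le> coeff_norm_sum (c - monom 1 (degree c)) * norm z powr (real (degree c) - 1)"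
    by (rule poly_norm_le_powr[OF z1 exps])
  also have "norm z powr (real (degree c) - 1) = norm z ^ degree c / norm z"
    using z0 by (simp add: powr_diff powr_realpow)
  finally show ?thesis by simp
qed

lemma tendsto_norm_ratio_one:
  fixes a b :: "'a \<Rightarrow> 'b::real_normed_vector" and e :: "'a \<Rightarrow> real"
  assumes bound: "eventually (\<lambda>x. b x \<noteq> 0 \<and> norm (a x - b x) / norm (b x) \<le> e x) F"
    and e0: "(e \<longlongrightarrow> 0) F"
  shows "((\<lambda>x. norm (a x) / norm (b x)) \<longlongrightarrow> 1) F"
proof -
  have "eventually (\<lambda>x. norm (norm (a x) / norm (b x) - 1) \<le> e x) F"
    using bound
  proof eventually_elim
    case (elim x)
    then have "norm (norm (a x) / norm (b x) - 1) = \<bar>norm (a x) - norm (b x)\<bar> / norm (b x)"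
      by (simp add: field_simps abs_divide)
    also have "\<dots> \<le> norm (a x - b x) / norm (b x)"
      by (intro divide_right_mono norm_triangle_ineq3) auto
    finally show ?case using elim by simp
  qed
  then have "((\<lambda>x. norm (a x) / norm (b x) - 1) \<longlongrightarrow> 0) F"
    by (rule Lim_null_comparison[OF _ e0])
  then show ?thesis by (simp add: LIM_zero_iff)
qed

lemma monic_poly_norm_asymp:
  fixes p :: "complex poly"
  assumes monic: "lead_coeff p = 1"
  shows "((\<lambda>z. norm (poly p z) / norm z ^ degree p) \<longlongrightarrow> 1) at_infinity"
proof -
  define C where "C = coeff_norm_sum (p - monom 1 (degree p))"
  have "((\<lambda>z. norm (poly p z) / norm (z ^ degree p)) \<longlongrightarrow> 1) at_infinity"
  proof (rule tendsto_norm_ratio_one)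
    show "eventually (\<lambda>z. z ^ degree p \<noteq> 0
            \<and> norm (poly p z - z ^ degree p) / norm (z ^ degree p) \<le> C * inverse (norm z)) at_infinity"
      unfolding eventually_at_infinity
    proof (intro exI allI impI)
      fix z :: complex assume z1: "1 \<le> norm z"
      then have z0: "z \<noteq> 0" by auto
      have "norm (poly p z - z ^ degree p) / norm (z ^ degree p)
              \<le> C * norm z ^ degree p / norm z / norm z ^ degree p"
        unfolding C_def norm_power
        by (rule divide_right_mono[OF monic_poly_remainder_bound[OF monic z1]]) simp
      also have "\<dots> = C * inverse (norm z)" using z0 by (simp add: field_simps)
      finally show "z ^ degree p \<noteq> 0 \<and> norm (poly p z - z ^ degree p) / norm (z ^ degree p)
                   \<le> C * inverse (norm z)"
        using z0 by (simp add: field_simps)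
    qed
    show "((\<lambda>z::complex. C * inverse (norm z)) \<longlongrightarrow> 0) at_infinity"
      using tendsto_mult_right_zero[OF tendsto_inverse_0_at_top[OF filterlim_norm_at_top]] .
  qed
  then show ?thesis by (simp add: norm_power)
qed

(* A bivariate polynomial has only finitely many monomials, so alpha_exp is a genuine maximum. *)
lemma finite_monomial_exps: "finite (monomial_exps q)"
proof (rule finite_subset)
  show "monomial_exps q \<subseteq> (\<Union>m\<le>degree q. (\<lambda>n. (n, m)) ` {..degree (coeff q m)})"
  proof
    fix x assume "x \<in> monomial_exps q"
    then obtain n m where x: "x = (n, m)" and c: "coeff (coeff q m) n \<noteq> 0"
      by (auto simp: monomial_exps_def)
    then have "m \<le> degree q" "n \<le> degree (coeff q m)"
      by (auto intro: le_degree)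
    then show "x \<in> (\<Union>m\<le>degree q. (\<lambda>n. (n, m)) ` {..degree (coeff q m)})" using x by auto
  qed
qed auto

lemma alpha_exp_bound:
  assumes dq: "degree q < \<delta>" and c: "coeff (coeff q m) n \<noteq> 0"
  shows "real n \<le> alpha_exp \<delta> q * (real \<delta> - real m)"
proof -
  have mem: "(n, m) \<in> monomial_exps q" using c by (simp add: monomial_exps_def)
  have "m \<le> degree q" using c by (auto intro: le_degree)
  then have pos: "real \<delta> - real m > 0" using dq by simp
  have "real n / (real \<delta> - real m) \<le> alpha_exp \<delta> q" unfolding alpha_exp_def
    by (rule Max_ge) (use finite_monomial_exps mem in force)+
  then show ?thesis using pos by (simp add: pos_divide_le_eq mult.commute)
qed

lemma powr_monomial_rescale:
  fixes A W \<alpha> :: real and \<gamma> d m \<delta> :: nat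
  assumes A: "A > 0" and W: "W > 0" and md: "m \<le> d"
    and gam: "\<alpha> * (real \<delta> - real d) = real \<gamma>"
  shows "A powr (\<alpha> * (real \<delta> - real m)) * W ^ m = A ^ \<gamma> * W ^ d * (A powr \<alpha> / W) ^ (d - m)"
proof -
  have "\<alpha> * (real \<delta> - real m) = real \<gamma> + \<alpha> * real (d - m)"
    using md gam by (simp add: of_nat_diff algebra_simps)
  then have "A powr (\<alpha> * (real \<delta> - real m)) = A ^ \<gamma> * (A powr \<alpha>) ^ (d - m)"
    using A by (simp add: powr_add powr_realpow powr_powr[symmetric] mult.commute)
  moreover have "W ^ d = W ^ (d - m) * W ^ m" using md by (simp add: power_add[symmetric])
  ultimately show ?thesis using W by (simp add: power_divide field_simps)
qed

lemma lower_monomial_bound: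
  fixes c :: "complex poly" and z w :: complex and \<alpha> :: real and \<delta> m d \<gamma> :: nat
  assumes exps: "\<And>n. coeff c n \<noteq> 0 \<Longrightarrow> real n \<le> \<alpha> * (real \<delta> - real m)"
    and gam: "\<alpha> * (real \<delta> - real d) = real \<gamma>"
    and z1: "norm z \<ge> 1" and zw: "norm z powr \<alpha> \<le> norm w" and md: "m < d"
  shows "norm (poly c z * w ^ m)
           \<le> coeff_norm_sum c * (norm z powr \<alpha> / norm w) * (norm z ^ \<gamma> * norm w ^ d)"
proof -
  define u where "u = norm z powr \<alpha> / norm w"
  have z0: "norm z > 0" using z1 by linarith
  have w0: "norm w > 0" using zw z0 powr_gt_zero[of "norm z" \<alpha>] by linarith
  have u0: "u > 0" and u1: "u \<le> 1" using z0 w0 zw by (simp_all add: u_def)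
  have "norm (poly c z * w ^ m)
          \<le> coeff_norm_sum c * norm z powr (\<alpha> * (real \<delta> - real m)) * norm w ^ m"
    unfolding norm_mult norm_power
    by (rule mult_right_mono[OF poly_norm_le_powr[OF z1 exps]]) auto
  also have "\<dots> = coeff_norm_sum c * (norm z ^ \<gamma> * norm w ^ d * u ^ (d - m))"
    using powr_monomial_rescale[OF z0 w0, of m d \<alpha> \<delta> \<gamma>] md gam
    by (simp add: u_def mult.assoc)
  also have "\<dots> \<le> coeff_norm_sum c * (norm z ^ \<gamma> * norm w ^ d * u)"
  proof -
    have "u ^ (d - m) \<le> u ^ 1" using md u0 u1 by (intro power_decreasing) auto
    then show ?thesis using coeff_norm_sum_nonneg by (simp add: mult_left_mono)
  qed
  finally show ?thesis by (simp add: u_def mult_ac)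
qed

lemma eval2_leading_term_bound:
  fixes q :: "complex poly poly" and z w :: complex and \<alpha> :: real and \<delta> :: nat
  assumes exps: "\<And>n m. coeff (coeff q m) n \<noteq> 0 \<Longrightarrow> real n \<le> \<alpha> * (real \<delta> - real m)"
    and gam: "\<alpha> * (real \<delta> - real (degree q)) = real (degree (lead_coeff q))"
    and monic: "lead_coeff (lead_coeff q) = 1"
    and z1: "norm z \<ge> 1" and zw: "norm z powr \<alpha> \<le> norm w"
  shows "norm (eval2 q z w - z ^ degree (lead_coeff q) * w ^ degree q)
           \<le> ((\<Sum>m<degree q. coeff_norm_sum (coeff q m)) * (norm z powr \<alpha> / norm w)
               + coeff_norm_sum (lead_coeff q - monom 1 (degree (lead_coeff q))) / norm z)
             * (norm z ^ degree (lead_coeff q) * norm w ^ degree q)"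
proof -
  define d where "d = degree q"
  define b where "b = lead_coeff q"
  define \<gamma> where "\<gamma> = degree b"
  define N where "N = norm z ^ \<gamma> * norm w ^ d"
  define u where "u = norm z powr \<alpha> / norm w"
  have split: "eval2 q z w - z ^ \<gamma> * w ^ d
                 = (\<Sum>m<d. poly (coeff q m) z * w ^ m) + (poly b z - z ^ \<gamma>) * w ^ d"
    by (simp add: eval2_def d_def b_def \<gamma>_def lessThan_Suc_atMost[symmetric] algebra_simps)
  have lower: "norm (poly (coeff q m) z * w ^ m) \<le> coeff_norm_sum (coeff q m) * u * N"
    if "m < d" for m
    using lower_monomial_bound[OF exps gam z1 zw that[unfolded d_def]]
    by (simp add: N_def u_def d_def \<gamma>_def b_def)
  have top: "norm ((poly b z - z ^ \<gamma>) * w ^ d)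
               \<le> coeff_norm_sum (b - monom 1 \<gamma>) / norm z * N"
  proof -
    have "norm ((poly b z - z ^ \<gamma>) * w ^ d) = norm (poly b z - z ^ \<gamma>) * norm w ^ d"
      by (simp add: norm_mult norm_power)
    also have "\<dots> \<le> coeff_norm_sum (b - monom 1 \<gamma>) * norm z ^ \<gamma> / norm z * norm w ^ d"
      using monic_poly_remainder_bound[OF monic z1]
      by (intro mult_right_mono) (auto simp: b_def \<gamma>_def)
    finally show ?thesis by (simp add: N_def)
  qed
  have "norm (eval2 q z w - z ^ \<gamma> * w ^ d)
          \<le> (\<Sum>m<d. norm (poly (coeff q m) z * w ^ m)) + norm ((poly b z - z ^ \<gamma>) * w ^ d)"
    unfolding split by (rule order_trans[OF norm_triangle_ineq add_right_mono[OF norm_sum]])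
  also have "\<dots> \<le> (\<Sum>m<d. coeff_norm_sum (coeff q m) * u * N)
                   + coeff_norm_sum (b - monom 1 \<gamma>) / norm z * N"
    using lower top by (intro add_mono sum_mono) auto
  also have "\<dots> = ((\<Sum>m<d. coeff_norm_sum (coeff q m)) * u
                   + coeff_norm_sum (b - monom 1 \<gamma>) / norm z) * N"
    by (simp add: sum_distrib_left sum_distrib_right algebra_simps)
  finally show ?thesis by (simp add: d_def b_def \<gamma>_def N_def u_def)
qed

definition far_filter :: "real \<Rightarrow> (complex \<times> complex) filter" where
  "far_filter \<alpha> = inf (filtercomap (\<lambda>(z, w). norm z) at_top)
                      (filtercomap (\<lambda>(z, w). norm w / norm z powr \<alpha>) at_top)"

lemma far_filter_norm_fst: "filterlim (\<lambda>x. norm (fst x)) at_top (far_filter \<alpha>)"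
proof -
  have "filterlim (\<lambda>(z::complex, w::complex). norm z) at_top (far_filter \<alpha>)"
    unfolding far_filter_def by (rule filterlim_mono[OF filterlim_filtercomap order_refl inf_le1])
  then show ?thesis by (simp add: case_prod_unfold)
qed

lemma far_filter_slope:
  "filterlim (\<lambda>x. norm (snd x) / norm (fst x) powr \<alpha>) at_top (far_filter \<alpha>)"
proof -
  have "filterlim (\<lambda>(z::complex, w::complex). norm w / norm z powr \<alpha>) at_top (far_filter \<alpha>)"
    unfolding far_filter_def by (rule filterlim_mono[OF filterlim_filtercomap order_refl inf_le2])
  then show ?thesis by (simp add: case_prod_unfold)
qed

lemma far_filter_fst_at_infinity: "filterlim fst at_infinity (far_filter \<alpha>)"
  using far_filter_norm_fst filterlim_at_infinity_conv_norm_at_top by blast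

lemma far_filter_eventually_ge_one:
  "eventually (\<lambda>x. 1 \<le> norm (fst x) \<and> norm (fst x) powr \<alpha> \<le> norm (snd x)) (far_filter \<alpha>)"
proof -
  have "eventually (\<lambda>x. 1 \<le> norm (fst x) \<and> 1 \<le> norm (snd x) / norm (fst x) powr \<alpha>) (far_filter \<alpha>)"
    using far_filter_norm_fst far_filter_slope unfolding filterlim_at_top
    by (intro eventually_conj) auto
  then show ?thesis
  proof eventually_elim
    case (elim x)
    then have "norm (fst x) powr \<alpha> > 0" by auto
    with elim show ?case by (simp add: le_divide_eq)
  qed
qed

lemma eventually_far_filterE:
  assumes "eventually P (far_filter \<alpha>)"
  obtains N1 N2 where "\<And>z w. norm z \<ge> N1 \<Longrightarrow> norm w / norm z powr \<alpha> \<ge> N2 \<Longrightarrow> P (z, w)"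
proof -
  obtain P1 P2 where
    P1: "eventually P1 (filtercomap (\<lambda>(z::complex, w::complex). norm z) at_top)" and
    P2: "eventually P2 (filtercomap (\<lambda>(z::complex, w::complex). norm w / norm z powr \<alpha>) at_top)" and
    P: "\<And>x. P1 x \<Longrightarrow> P2 x \<Longrightarrow> P x"
    using assms unfolding far_filter_def eventually_inf by blast
  obtain N1 where N1: "\<And>x. (\<lambda>(z::complex, w::complex). norm z) x \<ge> N1 \<Longrightarrow> P1 x"
    using P1 unfolding eventually_filtercomap_at_top_linorder by blast
  obtain N2 where
    N2: "\<And>x. (\<lambda>(z::complex, w::complex). norm w / norm z powr \<alpha>) x \<ge> N2 \<Longrightarrow> P2 x"
    using P2 unfolding eventually_filtercomap_at_top_linorder by blast
  show ?thesis
  proof (rule that)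
    fix z w :: complex
    assume "norm z \<ge> N1" and "norm w / norm z powr \<alpha> \<ge> N2"
    then show "P (z, w)" using P N1[of "(z, w)"] N2[of "(z, w)"] by simp
  qed
qed

lemma poly_norm_asymp_far_filter:
  fixes p :: "complex poly"
  assumes "lead_coeff p = 1"
  shows "((\<lambda>x. norm (poly p (fst x)) / norm (fst x) ^ degree p) \<longlongrightarrow> 1) (far_filter \<alpha>)"
  using filterlim_compose[OF monic_poly_norm_asymp[OF assms] far_filter_fst_at_infinity] .

lemma eval2_norm_asymp:
  fixes q :: "complex poly poly" and \<alpha> :: real and \<delta> :: nat
  assumes exps: "\<And>n m. coeff (coeff q m) n \<noteq> 0 \<Longrightarrow> real n \<le> \<alpha> * (real \<delta> - real m)"
    and gam: "\<alpha> * (real \<delta> - real (degree q)) = real (degree (lead_coeff q))"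
    and monic: "lead_coeff (lead_coeff q) = 1"
  shows "((\<lambda>x. norm (eval2 q (fst x) (snd x))
                 / (norm (fst x) ^ degree (lead_coeff q) * norm (snd x) ^ degree q)) \<longlongrightarrow> 1)
           (far_filter \<alpha>)"
proof -
  define C1 where "C1 = (\<Sum>m<degree q. coeff_norm_sum (coeff q m))"
  define C2 where "C2 = coeff_norm_sum (lead_coeff q - monom 1 (degree (lead_coeff q)))"
  define lead where "lead x = fst x ^ degree (lead_coeff q) * snd x ^ degree q"
    for x :: "complex \<times> complex"
  define e where "e x = C1 * inverse (norm (snd x) / norm (fst x) powr \<alpha>)
                        + C2 * inverse (norm (fst x))" for x :: "complex \<times> complex"
  have "((\<lambda>x. norm (eval2 q (fst x) (snd x)) / norm (lead x)) \<longlongrightarrow> 1) (far_filter \<alpha>)"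
  proof (rule tendsto_norm_ratio_one)
    show "eventually (\<lambda>x. lead x \<noteq> 0
            \<and> norm (eval2 q (fst x) (snd x) - lead x) / norm (lead x) \<le> e x) (far_filter \<alpha>)"
      using far_filter_eventually_ge_one
    proof eventually_elim
      case (elim x)
      obtain z w where x: "x = (z, w)" by force
      have z1: "norm z \<ge> 1" and zw: "norm z powr \<alpha> \<le> norm w" using elim x by auto
      have z0: "norm z > 0" using z1 by linarith
      then have "norm w > 0" using zw powr_gt_zero[of "norm z" \<alpha>] by linarith
      then have N0: "norm (lead x) > 0" using z0 by (simp add: lead_def x norm_mult norm_power)
      have "norm (eval2 q z w - lead x)
              \<le> (C1 * (norm z powr \<alpha> / norm w) + C2 / norm z) * norm (lead x)"
        using eval2_leading_term_bound[OF exps gam monic z1 zw]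
        by (simp add: C1_def C2_def lead_def x norm_mult norm_power)
      then have "norm (eval2 q z w - lead x) / norm (lead x) \<le> C1 * (norm z powr \<alpha> / norm w) + C2 / norm z"
        using N0 by (simp add: pos_divide_le_eq)
      then show ?case using N0 by (simp add: e_def x divide_inverse mult.commute)
    qed
    show "(e \<longlongrightarrow> 0) (far_filter \<alpha>)"
      unfolding e_def
      using tendsto_add[OF tendsto_mult_right_zero[OF tendsto_inverse_0_at_top[OF far_filter_slope]]
                           tendsto_mult_right_zero[OF tendsto_inverse_0_at_top[OF far_filter_norm_fst]]]
      by simp
  qed
  then show ?thesis by (simp add: lead_def norm_mult norm_power)
qed

lemma normalized_ratio_identity:
  fixes A W P Q \<alpha> :: real and \<gamma> d \<delta> :: nat
  assumes A: "A > 0" and W: "W > 0" and P: "P > 0"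
    and gam: "\<alpha> * (real \<delta> - real d) = real \<gamma>"
  shows "(Q / P powr \<alpha>) / (W / A powr \<alpha>) ^ d = (Q / (A ^ \<gamma> * W ^ d)) / (P / A ^ \<delta>) powr \<alpha>"
proof -
  define a where "a = A powr \<alpha>"
  have a: "a > 0" using A by (simp add: a_def)
  have "A ^ \<gamma> = A powr (\<alpha> * real \<delta> - \<alpha> * real d)"
    using A gam by (simp add: powr_realpow[symmetric] algebra_simps)
  also have "\<dots> = a ^ \<delta> / a ^ d"
    using A by (simp add: powr_diff a_def powr_powr[symmetric] powr_realpow)
  finally have A_gam: "A ^ \<gamma> = a ^ \<delta> / a ^ d" .
  have P_pow: "(P / A ^ \<delta>) powr \<alpha> = P powr \<alpha> / a ^ \<delta>"
    using A P by (simp add: powr_divide a_def powr_realpow[symmetric] powr_powr mult.commute)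
  show ?thesis
    unfolding P_pow A_gam a_def[symmetric] using a W P by (simp add: field_simps power_divide)
qed

lemma eval2_over_poly_asymp:
  fixes p :: "complex poly" and q :: "complex poly poly" and \<alpha> :: real and \<delta> :: nat
  assumes exps: "\<And>n m. coeff (coeff q m) n \<noteq> 0 \<Longrightarrow> real n \<le> \<alpha> * (real \<delta> - real m)"
    and gam: "\<alpha> * (real \<delta> - real (degree q)) = real (degree (lead_coeff q))"
    and monic_q: "lead_coeff (lead_coeff q) = 1"
    and deg_p: "degree p = \<delta>" and monic_p: "lead_coeff p = 1"
  shows "((\<lambda>(z, w). (norm (eval2 q z w) / norm (poly p z) powr \<alpha>)
                    / (norm w / norm z powr \<alpha>) ^ degree q) \<longlongrightarrow> 1) (far_filter \<alpha>)"
proof -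
  define X where "X x = norm (eval2 q (fst x) (snd x))
                          / (norm (fst x) ^ degree (lead_coeff q) * norm (snd x) ^ degree q)"
    for x :: "complex \<times> complex"
  define Y where "Y x = norm (poly p (fst x)) / norm (fst x) ^ \<delta>" for x :: "complex \<times> complex"
  have X: "(X \<longlongrightarrow> 1) (far_filter \<alpha>)"
    unfolding X_def by (rule eval2_norm_asymp[OF exps gam monic_q])
  have Y: "(Y \<longlongrightarrow> 1) (far_filter \<alpha>)"
    unfolding Y_def deg_p[symmetric] by (rule poly_norm_asymp_far_filter[OF monic_p])
  have "((\<lambda>x. X x / Y x powr \<alpha>) \<longlongrightarrow> 1 / 1 powr \<alpha>) (far_filter \<alpha>)"
    by (intro tendsto_divide tendsto_powr X Y) auto
  moreover have "eventually (\<lambda>x. X x / Y x powr \<alpha>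
                   = (norm (eval2 q (fst x) (snd x)) / norm (poly p (fst x)) powr \<alpha>)
                     / (norm (snd x) / norm (fst x) powr \<alpha>) ^ degree q) (far_filter \<alpha>)"
    using far_filter_eventually_ge_one order_tendstoD(1)[OF Y zero_less_one]
  proof eventually_elim
    case (elim x)
    then have z0: "norm (fst x) > 0" and "norm (fst x) powr \<alpha> > 0" by auto
    with elim have w0: "norm (snd x) > 0" by linarith
    have "norm (poly p (fst x)) > 0" using elim z0 by (simp add: Y_def zero_less_divide_iff)
    from normalized_ratio_identity[OF z0 w0 this gam, of "norm (eval2 q (fst x) (snd x))"]
    show ?case unfolding X_def Y_def by (rule sym)
  qed
  ultimately show ?thesis
    by (simp add: case_prod_unfold Lim_transform_eventually)
qed

lemma power_ge_double:
  fixes t :: real and k :: nat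
  assumes "t \<ge> 2" and "k \<ge> 2"
  shows "t ^ k \<ge> 2 * t"
proof -
  have "2 * t \<le> t ^ 2" using assms(1) by (simp add: power2_eq_square)
  also have "\<dots> \<le> t ^ k" using assms by (intro power_increasing) auto
  finally show ?thesis .
qed

lemma far_filter_invariant_region:
  fixes P :: "complex \<Rightarrow> complex" and Q :: "complex \<Rightarrow> complex \<Rightarrow> complex"
    and \<alpha> :: real and d \<delta> :: nat
  assumes ratio: "((\<lambda>(z, w). (norm (Q z w) / norm (P z) powr \<alpha>)
                      / (norm w / norm z powr \<alpha>) ^ d) \<longlongrightarrow> 1) (far_filter \<alpha>)"
    and growth: "((\<lambda>x. norm (P (fst x)) / norm (fst x) ^ \<delta>) \<longlongrightarrow> 1) (far_filter \<alpha>)"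
    and \<delta>2: "\<delta> \<ge> 2" and d2: "d \<ge> 2"
  shows "\<exists>R0>0. \<forall>R\<ge>R0. (\<lambda>(z, w). (P z, Q z w)) ` W_set \<alpha> R \<subseteq> W_set \<alpha> R"
proof -
  define ratio_at where "ratio_at z w = (norm (Q z w) / norm (P z) powr \<alpha>)
                                         / (norm w / norm z powr \<alpha>) ^ d" for z w
  have "eventually (\<lambda>x. ratio_at (fst x) (snd x) > 1/2
                        \<and> norm (P (fst x)) / norm (fst x) ^ \<delta> > 1/2) (far_filter \<alpha>)"
    using order_tendstoD(1)[OF ratio, of "1/2"] order_tendstoD(1)[OF growth, of "1/2"]
    by (auto simp: ratio_at_def case_prod_beta eventually_conj_iff)
  then obtain N1 N2 where N:
    "\<And>z w. norm z \<ge> N1 \<Longrightarrow> norm w / norm z powr \<alpha> \<ge> N2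
       \<Longrightarrow> ratio_at z w > 1/2 \<and> norm (P z) / norm z ^ \<delta> > 1/2"
    by (rule eventually_far_filterE) auto
  define R0 where "R0 = max 2 (max N1 N2)"
  have "\<forall>R\<ge>R0. (\<lambda>(z, w). (P z, Q z w)) ` W_set \<alpha> R \<subseteq> W_set \<alpha> R"
  proof (intro allI impI subsetI)
    fix R y assume R: "R \<ge> R0" and "y \<in> (\<lambda>(z, w). (P z, Q z w)) ` W_set \<alpha> R"
    then obtain z w where y: "y = (P z, Q z w)" and zw: "(z, w) \<in> W_set \<alpha> R" by auto
    define t where "t = norm w / norm z powr \<alpha>"
    have R2: "R \<ge> 2" using R by (simp add: R0_def)
    have zR: "norm z > R" using zw by (simp add: W_set_def)
    then have z0: "norm z > 0" using R2 by linarith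
    then have z_pow: "norm z powr \<alpha> > 0" by simp
    then have tR: "t > R" using zw by (simp add: W_set_def t_def pos_less_divide_eq)
    have bounds: "ratio_at z w > 1/2" "norm (P z) / norm z ^ \<delta> > 1/2"
      using N[of z w] zR tR R by (auto simp: R0_def t_def)
    have "norm z \<le> (1/2) * norm z ^ \<delta>"
      using power_ge_double[of "norm z" \<delta>] zR R2 \<delta>2 by simp
    also have "\<dots> < norm (P z)"
    proof -
      have "norm z ^ \<delta> > 0" using z0 by simp
      then show ?thesis using bounds(2) by (simp add: less_divide_eq)
    qed
    finally have PR: "norm (P z) > R" using zR by simp
    then have P_pow: "norm (P z) powr \<alpha> > 0" using R2 by auto
    have td: "t ^ d \<ge> 2 * R"
      using power_ge_double[of t d] tR R2 d2 by simp
    have "R * norm (P z) powr \<alpha> = (1/2) * norm (P z) powr \<alpha> * (2 * R)" by simp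
    also have "\<dots> < ratio_at z w * norm (P z) powr \<alpha> * t ^ d"
      using bounds(1) P_pow td R2 by (intro mult_less_le_imp_less mult_strict_right_mono) auto
    also have "\<dots> = norm (Q z w)"
    proof -
      have "w \<noteq> 0" using tR R2 by (auto simp: t_def)
      then show ?thesis using P_pow z0 by (simp add: ratio_at_def t_def)
    qed
    finally show "y \<in> W_set \<alpha> R" using PR by (simp add: y W_set_def)
  qed
  moreover have "R0 > 0" by (simp add: R0_def)
  ultimately show ?thesis by blast
qed

theorem lemma4p5:
  fixes p :: "complex poly" and q :: "complex poly poly" and \<delta> :: nat
  assumes "degree p = \<delta>" and "lead_coeff p = 1" and "\<delta> \<ge> 2"
    and "degree q \<ge> 2"
    and "lead_coeff (lead_coeff q) = 1"
    and "\<delta> > degree q"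
    and "alpha_exp \<delta> q = real (degree (lead_coeff q)) / (real \<delta> - real (degree q))"
  shows "((\<lambda>(z, w). (norm (eval2 q z w) / norm (poly p z) powr alpha_exp \<delta> q)
                    / (norm w / norm z powr alpha_exp \<delta> q) ^ degree q) \<longlongrightarrow> 1)
           (inf (filtercomap (\<lambda>(z, w). norm z) at_top)
                (filtercomap (\<lambda>(z, w). norm w / norm z powr alpha_exp \<delta> q) at_top))
         \<and> (\<exists>R0>0. \<forall>R\<ge>R0. (\<lambda>(z, w). (poly p z, eval2 q z w)) ` W_set (alpha_exp \<delta> q) R
                          \<subseteq> W_set (alpha_exp \<delta> q) R)"
proof -
  note deg_p = assms(1) and monic_p = assms(2) and monic_q = assms(5) and deg_q = assms(6)
  define \<alpha> where "\<alpha> = alpha_exp \<delta> q"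
  have gam: "\<alpha> * (real \<delta> - real (degree q)) = real (degree (lead_coeff q))"
    using assms(6,7) by (simp add: \<alpha>_def)
  have exps: "real n \<le> \<alpha> * (real \<delta> - real m)" if "coeff (coeff q m) n \<noteq> 0" for n m
    unfolding \<alpha>_def using alpha_exp_bound[OF deg_q that] .
  have ratio: "((\<lambda>(z, w). (norm (eval2 q z w) / norm (poly p z) powr \<alpha>)
                  / (norm w / norm z powr \<alpha>) ^ degree q) \<longlongrightarrow> 1) (far_filter \<alpha>)"
    by (rule eval2_over_poly_asymp[OF exps gam monic_q deg_p monic_p])
  have growth: "((\<lambda>x. norm (poly p (fst x)) / norm (fst x) ^ \<delta>) \<longlongrightarrow> 1) (far_filter \<alpha>)"
    using poly_norm_asymp_far_filter[OF monic_p] by (simp add: deg_p)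
  have "\<exists>R0>0. \<forall>R\<ge>R0. (\<lambda>(z, w). (poly p z, eval2 q z w)) ` W_set \<alpha> R \<subseteq> W_set \<alpha> R"
    by (rule far_filter_invariant_region[OF ratio growth assms(3,4)])
  with ratio show ?thesis unfolding far_filter_def \<alpha>_def by blast
qed

end
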